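(* Let $\mathbf n\ge 2$ and let $A,B,C\cong\mathbb C^{\mathbf n^2}$ have bases $\{x^i_j\},\{y^j_k\},\{z^k_i\}$ ($1\le i,j,k\le\mathbf n$). Let $M_{\langle\mathbf n\rangle}=\sum_{i,j,k=1}^{\mathbf n}x^i_j\otimes y^j_k\otimes z^k_i$ and let $$M^{red}_{\langle\mathbf n\rangle}=M_{\langle\mathbf n\rangle}-\sum_{j=1}^{\mathbf n}x^1_{\mathbf n}\otimes y^{\mathbf n}_j\otimes z^j_1.$$ Then $\underline{\mathbf R}(M_{\langle\mathbf n\rangle})\ge\underline{\mathbf R}(M^{red}_{\langle\mathbf n\rangle})+1$.
   Context: The border rank $\underline{\mathbf R}(T)$ of a tensor $T$ is the smallest $r$ such that $T$ is a limit of sums of $r$ rank one tensors $a\otimes b\otimes c$. $M_{\langle\mathbf n\rangle}$ is the $\mathbf n\times\mathbf n$ matrix multiplication tensor. *)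

theory Defs
  imports Complex_Main
begin

text \<open>A tensor in A \<otimes> B \<otimes> C, where A, B, C have bases indexed by finite sets
  IA, IB, IC, is represented by its coordinate function; only values on
  IA \<times> IB \<times> IC are meaningful.\<close>

definition basis_vec :: "'a \<Rightarrow> 'a \<Rightarrow> complex" where
  "basis_vec p = (\<lambda>q. if q = p then 1 else 0)"

definition rank_one :: "('a \<Rightarrow> complex) \<Rightarrow> ('b \<Rightarrow> complex) \<Rightarrow> ('c \<Rightarrow> complex)
    \<Rightarrow> 'a \<Rightarrow> 'b \<Rightarrow> 'c \<Rightarrow> complex" where
  "rank_one a b c = (\<lambda>x y z. a x * b y * c z)"

text \<open>T is a limit (coordinatewise, equivalently in the Euclidean topology of the
  finite-dimensional tensor space) of sums of r rank one tensors.\<close>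
definition border_rank_le :: "'a set \<Rightarrow> 'b set \<Rightarrow> 'c set \<Rightarrow> ('a \<Rightarrow> 'b \<Rightarrow> 'c \<Rightarrow> complex) \<Rightarrow> nat \<Rightarrow> bool" where
  "border_rank_le IA IB IC T r \<longleftrightarrow>
     (\<exists>a b c. \<forall>x\<in>IA. \<forall>y\<in>IB. \<forall>z\<in>IC.
        (\<lambda>m::nat. \<Sum>l<r. rank_one (a m l) (b m l) (c m l) x y z) \<longlonglongrightarrow> T x y z)"

definition border_rank :: "'a set \<Rightarrow> 'b set \<Rightarrow> 'c set \<Rightarrow> ('a \<Rightarrow> 'b \<Rightarrow> 'c \<Rightarrow> complex) \<Rightarrow> nat" where
  "border_rank IA IB IC T = (LEAST r. border_rank_le IA IB IC T r)"

definition mat_idx :: "nat \<Rightarrow> (nat \<times> nat) set" where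
  "mat_idx n = {1..n} \<times> {1..n}"

definition matmul_tensor :: "nat \<Rightarrow> nat \<times> nat \<Rightarrow> nat \<times> nat \<Rightarrow> nat \<times> nat \<Rightarrow> complex" where
  "matmul_tensor n = (\<lambda>x y z. \<Sum>i\<in>{1..n}. \<Sum>j\<in>{1..n}. \<Sum>k\<in>{1..n}.
      rank_one (basis_vec (i,j)) (basis_vec (j,k)) (basis_vec (k,i)) x y z)"

definition matmul_red :: "nat \<Rightarrow> nat \<times> nat \<Rightarrow> nat \<times> nat \<Rightarrow> nat \<times> nat \<Rightarrow> complex" where
  "matmul_red n = (\<lambda>x y z. matmul_tensor n x y z
      - (\<Sum>j\<in>{1..n}. rank_one (basis_vec (1,n)) (basis_vec (n,j)) (basis_vec (j,1)) x y z))"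

end

theory Submission
  imports Defs "HOL-Combinatorics.Transposition"
begin

text \<open>
  Take a sum of r rank one tensors close to M. Projecting A along a basis vector x_q at which
  the A-factor of the first term has maximal modulus kills that term and sends M to
  M - v \<otimes> (slice of M at x_q) with |v| \<le> 1 and v_q = 1. By the symmetries of M we may take
  q = (1, n), and then this tensor differs from M_red only by the terms x_p \<otimes> y^n_k \<otimes> z^k_1
  with p \<noteq> (1, n). A one-parameter torus element with parameter t fixes every term of M and
  shrinks those terms by a factor at most t, while it enlarges the approximation error by at
  most 1/t^2. Letting the error tend to 0 faster than t^2 exhibits M_red as a limit of
  sums of r - 1 rank one tensors.
\<close>

definition tensor_rank_le :: "'a set \<Rightarrow> 'b set \<Rightarrow> 'c set \<Rightarrow> ('a \<Rightarrow> 'b \<Rightarrow> 'c \<Rightarrow> complex) \<Rightarrow> nat \<Rightarrow> bool" where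
  "tensor_rank_le IA IB IC T r \<longleftrightarrow>
     (\<exists>a b c. \<forall>x\<in>IA. \<forall>y\<in>IB. \<forall>z\<in>IC. (\<Sum>l<r. rank_one (a l) (b l) (c l) x y z) = T x y z)"

lemma border_rank_le_iff_approx:
  assumes "finite IA" "finite IB" "finite IC"
  shows "border_rank_le IA IB IC T r \<longleftrightarrow>
    (\<forall>\<epsilon>>0. \<exists>S. tensor_rank_le IA IB IC S r \<and>
       (\<forall>x\<in>IA. \<forall>y\<in>IB. \<forall>z\<in>IC. cmod (S x y z - T x y z) < \<epsilon>))"
proof
  assume "border_rank_le IA IB IC T r"
  then obtain a b c where lim: "\<forall>x\<in>IA. \<forall>y\<in>IB. \<forall>z\<in>IC.
      (\<lambda>m. \<Sum>l<r. rank_one (a m l) (b m l) (c m l) x y z) \<longlonglongrightarrow> T x y z"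
    unfolding border_rank_le_def by blast
  show "\<forall>\<epsilon>>0. \<exists>S. tensor_rank_le IA IB IC S r \<and>
       (\<forall>x\<in>IA. \<forall>y\<in>IB. \<forall>z\<in>IC. cmod (S x y z - T x y z) < \<epsilon>)"
  proof (intro allI impI)
    fix \<epsilon> :: real assume "\<epsilon> > 0"
    define S where "S m x y z = (\<Sum>l<r. rank_one (a m l) (b m l) (c m l) x y z)" for m x y z
    have "\<forall>x\<in>IA. \<forall>y\<in>IB. \<forall>z\<in>IC. eventually (\<lambda>m. cmod (S m x y z - T x y z) < \<epsilon>) sequentially"
      using lim \<open>\<epsilon> > 0\<close> unfolding S_def by (auto simp: tendsto_iff dist_norm)
    then have "eventually (\<lambda>m. \<forall>x\<in>IA. \<forall>y\<in>IB. \<forall>z\<in>IC. cmod (S m x y z - T x y z) < \<epsilon>) sequentially"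
      using assms by (simp add: eventually_ball_finite_distrib)
    then obtain m where "\<forall>x\<in>IA. \<forall>y\<in>IB. \<forall>z\<in>IC. cmod (S m x y z - T x y z) < \<epsilon>"
      using eventually_sequentially by auto
    moreover have "tensor_rank_le IA IB IC (S m) r"
      unfolding tensor_rank_le_def S_def by blast
    ultimately show "\<exists>S. tensor_rank_le IA IB IC S r \<and>
       (\<forall>x\<in>IA. \<forall>y\<in>IB. \<forall>z\<in>IC. cmod (S x y z - T x y z) < \<epsilon>)"
      by blast
  qed
next
  assume approx: "\<forall>\<epsilon>>0. \<exists>S. tensor_rank_le IA IB IC S r \<and>
       (\<forall>x\<in>IA. \<forall>y\<in>IB. \<forall>z\<in>IC. cmod (S x y z - T x y z) < \<epsilon>)"
  define close where "close m a b c \<longleftrightarrow> (\<forall>x\<in>IA. \<forall>y\<in>IB. \<forall>z\<in>IC.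
      cmod ((\<Sum>l<r. rank_one (a l) (b l) (c l) x y z) - T x y z) < 1 / Suc m)" for m a b c
  have "\<forall>m::nat. \<exists>a b c. close m a b c"
  proof
    fix m :: nat
    obtain S where "tensor_rank_le IA IB IC S r"
        and S: "\<forall>x\<in>IA. \<forall>y\<in>IB. \<forall>z\<in>IC. cmod (S x y z - T x y z) < 1 / Suc m"
      using approx by force
    then obtain a b c where "\<forall>x\<in>IA. \<forall>y\<in>IB. \<forall>z\<in>IC. (\<Sum>l<r. rank_one (a l) (b l) (c l) x y z) = S x y z"
      unfolding tensor_rank_le_def by blast
    with S show "\<exists>a b c. close m a b c"
      unfolding close_def by (intro exI[of _ a] exI[of _ b] exI[of _ c]) simp
  qed
  then obtain a where "\<forall>m. \<exists>b c. close m (a m) b c" by (auto simp: choice_iff)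
  then obtain b where "\<forall>m. \<exists>c. close m (a m) (b m) c" by (auto simp: choice_iff)
  then obtain c where abc: "\<forall>m. close m (a m) (b m) (c m)" by (auto simp: choice_iff)
  have "(\<lambda>m. \<Sum>l<r. rank_one (a m l) (b m l) (c m l) x y z) \<longlonglongrightarrow> T x y z"
    if "x \<in> IA" "y \<in> IB" "z \<in> IC" for x y z
    using LIMSEQ_norm_0[of "\<lambda>m. (\<Sum>l<r. rank_one (a m l) (b m l) (c m l) x y z) - T x y z"]
      abc that by (simp add: close_def LIM_zero_iff)
  then show "border_rank_le IA IB IC T r"
    unfolding border_rank_le_def by blast
qed

lemma tensor_rank_le_card:
  assumes "finite IA" "finite IB" "finite IC"
  shows "tensor_rank_le IA IB IC T (card (IA \<times> IB \<times> IC))"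
proof -
  let ?S = "IA \<times> IB \<times> IC"
  obtain f where f: "bij_betw f {..<card ?S} ?S"
    using ex_bij_betw_nat_finite[of ?S] assms by (auto simp: atLeast0LessThan)
  define g where "g p = rank_one (\<lambda>x. T (fst p) (fst (snd p)) (snd (snd p)) * basis_vec (fst p) x)
       (basis_vec (fst (snd p))) (basis_vec (snd (snd p)))" for p
  have sum_g: "(\<Sum>l<card ?S. g (f l) x y z) = T x y z" if "x \<in> IA" "y \<in> IB" "z \<in> IC" for x y z
  proof -
    have "(\<Sum>l<card ?S. g (f l) x y z) = (\<Sum>p\<in>?S. g p x y z)"
      using sum.reindex_bij_betw[OF f, of "\<lambda>p. g p x y z"] by simp
    also have "\<dots> = (\<Sum>p\<in>?S. if p = (x, y, z) then T x y z else 0)"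
      by (intro sum.cong) (auto simp: g_def rank_one_def basis_vec_def)
    also have "\<dots> = T x y z"
      using assms that by simp
    finally show ?thesis .
  qed
  then show ?thesis
    unfolding tensor_rank_le_def g_def by (intro exI ballI) (rule sum_g[unfolded g_def])
qed

lemma border_rank_le_border_rank:
  assumes "finite IA" "finite IB" "finite IC"
  shows "border_rank_le IA IB IC T (border_rank IA IB IC T)"
proof -
  have "border_rank_le IA IB IC T (card (IA \<times> IB \<times> IC))"
    using assms tensor_rank_le_card[OF assms, of T]
    by (auto simp: border_rank_le_iff_approx intro!: exI[of _ T])
  then show ?thesis
    unfolding border_rank_def by (rule LeastI)
qed

lemma border_rank_le_zero_vanishes:
  assumes "border_rank_le IA IB IC T 0" "x \<in> IA" "y \<in> IB" "z \<in> IC"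
  shows "T x y z = 0"
  using assms LIMSEQ_unique[OF tendsto_const] unfolding border_rank_le_def by force

lemma tensor_rank_le_reindex_scale:
  assumes "tensor_rank_le IA IB IC T r"
    and "f ` IA' \<subseteq> IA" "g ` IB' \<subseteq> IB" "h ` IC' \<subseteq> IC"
  shows "tensor_rank_le IA' IB' IC' (\<lambda>x y z. \<alpha> x * \<beta> y * \<gamma> z * T (f x) (g y) (h z)) r"
proof -
  obtain a b c where abc: "\<forall>x\<in>IA. \<forall>y\<in>IB. \<forall>z\<in>IC. (\<Sum>l<r. rank_one (a l) (b l) (c l) x y z) = T x y z"
    using assms(1) unfolding tensor_rank_le_def by blast
  have sum_eq: "(\<Sum>l<r. rank_one (\<lambda>x. \<alpha> x * a l (f x)) (\<lambda>y. \<beta> y * b l (g y)) (\<lambda>z. \<gamma> z * c l (h z)) x y z)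
      = \<alpha> x * \<beta> y * \<gamma> z * T (f x) (g y) (h z)"
    if "x \<in> IA'" "y \<in> IB'" "z \<in> IC'" for x y z
  proof -
    have "T (f x) (g y) (h z) = (\<Sum>l<r. a l (f x) * b l (g y) * c l (h z))"
      using abc that assms(2-4) by (force simp: rank_one_def)
    then show ?thesis
      by (simp add: rank_one_def sum_distrib_left algebra_simps)
  qed
  then show ?thesis
    unfolding tensor_rank_le_def by (intro exI ballI) (rule sum_eq)
qed

text \<open>Maximality of the chosen coordinate q is what keeps the coefficients v bounded.\<close>

lemma tensor_rank_le_project:
  assumes "tensor_rank_le IA IB IC T r" "r \<ge> 1" "finite IA" "IA \<noteq> {}"
  obtains q v where "q \<in> IA" "\<forall>x\<in>IA. cmod (v x) \<le> 1" "v q = 1"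
    "tensor_rank_le IA IB IC (\<lambda>x y z. T x y z - v x * T q y z) (r - 1)"
proof -
  obtain a b c where abc: "\<forall>x\<in>IA. \<forall>y\<in>IB. \<forall>z\<in>IC. (\<Sum>l<r. rank_one (a l) (b l) (c l) x y z) = T x y z"
    using assms(1) unfolding tensor_rank_le_def by blast
  obtain q where q: "q \<in> IA" "cmod (a 0 q) = Max ((\<lambda>x. cmod (a 0 x)) ` IA)"
    using Max_in[of "(\<lambda>x. cmod (a 0 x)) ` IA"] assms(3,4) by fastforce
  have q_max: "cmod (a 0 x) \<le> cmod (a 0 q)" if "x \<in> IA" for x
    using q assms(3) that by simp
  define v where "v x = (if a 0 q = 0 then (if x = q then 1 else 0) else a 0 x / a 0 q)" for x
  have v_le: "\<forall>x\<in>IA. cmod (v x) \<le> 1"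
    using q_max by (auto simp: v_def norm_divide divide_le_eq_1)
  have a0: "a 0 x = a 0 q * v x" if "x \<in> IA" for x
    using q_max[OF that] by (auto simp: v_def)
  define a' where "a' l x = a (Suc l) x - a (Suc l) q * v x" for l x
  have sum_eq: "(\<Sum>l<r - 1. rank_one (a' l) (b (Suc l)) (c (Suc l)) x y z) = T x y z - v x * T q y z"
    if "x \<in> IA" "y \<in> IB" "z \<in> IC" for x y z
  proof -
    have "T x' y z = (\<Sum>l<r. a l x' * b l y * c l z)" if "x' \<in> IA" for x'
      using abc that \<open>y \<in> IB\<close> \<open>z \<in> IC\<close> by (simp add: rank_one_def)
    then have "T x y z - v x * T q y z = (\<Sum>l<r. (a l x - a l q * v x) * b l y * c l z)"
      using that(1) q(1) by (simp add: sum_distrib_left sum_subtractf algebra_simps)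
    also have "\<dots> = (\<Sum>l<r - 1. (a (Suc l) x - a (Suc l) q * v x) * b (Suc l) y * c (Suc l) z)"
      using assms(2) a0[OF that(1)] by (cases r) (simp_all only: sum.lessThan_Suc_shift, simp_all)
    finally show ?thesis
      by (simp add: a'_def rank_one_def)
  qed
  have "tensor_rank_le IA IB IC (\<lambda>x y z. T x y z - v x * T q y z) (r - 1)"
    unfolding tensor_rank_le_def by (intro exI ballI) (rule sum_eq)
  with q(1) v_le show ?thesis
    by (intro that) (auto simp: v_def)
qed

lemma norm_scaled_projection_diff_le:
  fixes W :: real and a a' b b' w :: complex
  assumes "0 \<le> W" "cmod w \<le> 1" "cmod (a - a') \<le> \<delta>" "cmod (b - b') \<le> \<delta>"
  shows "cmod (W * (a - w * b) - W * (a' - w * b')) \<le> 2 * W * \<delta>"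
proof -
  have "cmod ((a - a') - w * (b - b')) \<le> cmod (a - a') + cmod w * cmod (b - b')"
    using norm_triangle_ineq4[of "a - a'" "w * (b - b')"] by (simp add: norm_mult)
  also have "\<dots> \<le> 2 * \<delta>"
    using assms(2-4) mult_mono[of "cmod w" 1 "cmod (b - b')" \<delta>] by simp
  finally have "W * cmod ((a - a') - w * (b - b')) \<le> W * (2 * \<delta>)"
    using assms(1) by (rule mult_left_mono)
  moreover have "W * (a - w * b) - W * (a' - w * b') = W * ((a - a') - w * (b - b'))"
    by (simp add: algebra_simps)
  ultimately show ?thesis
    using assms(1) by (simp add: norm_mult)
qed

lemma finite_mat_idx: "finite (mat_idx n)"
  by (simp add: mat_idx_def)

lemma matmul_tensor_apply:
  assumes "x \<in> mat_idx n" "y \<in> mat_idx n" "z \<in> mat_idx n"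
  shows "matmul_tensor n x y z = (if snd x = fst y \<and> snd y = fst z \<and> snd z = fst x then 1 else 0)"
proof -
  obtain x1 x2 y1 y2 z1 z2 where xyz: "x = (x1, x2)" "y = (y1, y2)" "z = (z1, z2)"
    by (cases x, cases y, cases z) auto
  have "matmul_tensor n x y z = (\<Sum>i\<in>{1..n}. \<Sum>j\<in>{1..n}. \<Sum>k\<in>{1..n}.
      if k = y2 then if j = x2 then if i = z2 then (if i = x1 \<and> j = y1 \<and> k = z1 then 1 else 0)
      else 0 else 0 else 0)"
    unfolding matmul_tensor_def rank_one_def basis_vec_def xyz by (intro sum.cong refl) auto
  also have "\<dots> = (if x2 = y1 \<and> y2 = z1 \<and> z2 = x1 then 1 else 0)"
    using assms xyz by (simp add: sum.delta mat_idx_def)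
  finally show ?thesis
    using xyz by simp
qed

lemma matmul_red_apply:
  assumes "x \<in> mat_idx n" "y \<in> mat_idx n" "z \<in> mat_idx n"
  shows "matmul_red n x y z = (if x = (1, n) then 0 else matmul_tensor n x y z)"
proof -
  obtain y1 y2 z1 z2 where yz: "y = (y1, y2)" "z = (z1, z2)"
    by (cases y, cases z) auto
  have "(\<Sum>j\<in>{1..n}. rank_one (basis_vec (1, n)) (basis_vec (n, j)) (basis_vec (j, 1)) x y z)
      = (\<Sum>j\<in>{1..n}. if j = y2 then (if x = (1, n) \<and> y1 = n \<and> z1 = j \<and> z2 = 1 then 1 else 0) else 0)"
    unfolding rank_one_def basis_vec_def yz by (intro sum.cong refl) auto
  also have "\<dots> = (if x = (1, n) then matmul_tensor n x y z else 0)"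
    using assms yz matmul_tensor_apply[OF assms] by (auto simp: mat_idx_def)
  finally show ?thesis
    unfolding matmul_red_def by simp
qed

lemma border_rank_le_matmul_tensor_pos:
  assumes "border_rank_le (mat_idx n) (mat_idx n) (mat_idx n) (matmul_tensor n) r" "n \<ge> 1"
  shows "r \<ge> 1"
proof (rule ccontr)
  assume "\<not> r \<ge> 1"
  then have zero: "border_rank_le (mat_idx n) (mat_idx n) (mat_idx n) (matmul_tensor n) 0"
    using assms(1) by (simp add: not_less_eq_eq)
  have one: "(1, 1) \<in> mat_idx n"
    using assms(2) by (simp add: mat_idx_def)
  have "matmul_tensor n (1, 1) (1, 1) (1, 1) = 1"
    using matmul_tensor_apply[OF one one one] by simp
  then show False
    using border_rank_le_zero_vanishes[OF zero one one one] by simp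
qed

lemma matmul_tensor_permute:
  assumes "bij_betw p {1..n} {1..n}" "bij_betw q {1..n} {1..n}" "bij_betw s {1..n} {1..n}"
    and "x \<in> mat_idx n" "y \<in> mat_idx n" "z \<in> mat_idx n"
  shows "matmul_tensor n (map_prod p q x) (map_prod q s y) (map_prod s p z) = matmul_tensor n x y z"
proof -
  have "bij_betw (map_prod f g) (mat_idx n) (mat_idx n)"
    if "bij_betw f {1..n} {1..n}" "bij_betw g {1..n} {1..n}" for f g
    unfolding mat_idx_def using that by (rule bij_betw_map_prod)
  then have mem: "map_prod p q x \<in> mat_idx n" "map_prod q s y \<in> mat_idx n" "map_prod s p z \<in> mat_idx n"
    using assms by (meson bij_betw_apply)+
  have coords: "fst x \<in> {1..n}" "snd x \<in> {1..n}" "fst y \<in> {1..n}" "snd y \<in> {1..n}"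
      "fst z \<in> {1..n}" "snd z \<in> {1..n}"
    using assms(4-6) unfolding mat_idx_def by (simp_all only: mem_Times_iff)
  have inj: "q (snd x) = q (fst y) \<longleftrightarrow> snd x = fst y" "s (snd y) = s (fst z) \<longleftrightarrow> snd y = fst z"
      "p (snd z) = p (fst x) \<longleftrightarrow> snd z = fst x"
    using coords by (simp_all only: inj_on_eq_iff[OF bij_betw_imp_inj_on[OF assms(1)]]
        inj_on_eq_iff[OF bij_betw_imp_inj_on[OF assms(2)]] inj_on_eq_iff[OF bij_betw_imp_inj_on[OF assms(3)]])
  show ?thesis
    using matmul_tensor_apply[OF mem] matmul_tensor_apply[OF assms(4-6)] by (simp add: inj)
qed

lemma matmul_tensor_move_to_corner:
  assumes "q \<in> mat_idx n"
  obtains sA sB sC where "bij_betw sA (mat_idx n) (mat_idx n)" "bij_betw sB (mat_idx n) (mat_idx n)"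
    "bij_betw sC (mat_idx n) (mat_idx n)" "sA (1, n) = q"
    "\<forall>x\<in>mat_idx n. \<forall>y\<in>mat_idx n. \<forall>z\<in>mat_idx n.
       matmul_tensor n (sA x) (sB y) (sC z) = matmul_tensor n x y z"
proof -
  obtain i0 j0 where q: "q = (i0, j0)" "i0 \<in> {1..n}" "j0 \<in> {1..n}"
    using assms by (auto simp: mat_idx_def)
  define p where "p = transpose 1 i0"
  define p' where "p' = transpose n j0"
  have bij: "bij_betw p {1..n} {1..n}" "bij_betw p' {1..n} {1..n}" "bij_betw id {1..n} {1..n}"
    using q by (simp_all add: p_def p'_def)
  show ?thesis
  proof
    show "bij_betw (map_prod p p') (mat_idx n) (mat_idx n)" "bij_betw (map_prod p' id) (mat_idx n) (mat_idx n)"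
      "bij_betw (map_prod id p) (mat_idx n) (mat_idx n)"
      unfolding mat_idx_def using bij by (auto intro: bij_betw_map_prod)
    show "map_prod p p' (1, n) = q"
      by (simp add: p_def p'_def q)
    show "\<forall>x\<in>mat_idx n. \<forall>y\<in>mat_idx n. \<forall>z\<in>mat_idx n.
       matmul_tensor n (map_prod p p' x) (map_prod p' id y) (map_prod id p z) = matmul_tensor n x y z"
      using matmul_tensor_permute[OF bij] by blast
  qed
qed

text \<open>
  Torus weights: their product is 1 on each term x^i_j \<otimes> y^j_k \<otimes> z^k_i of M, and t times the
  A-weight on x^i_j \<otimes> y^n_k \<otimes> z^k_1, which is at most t unless (i, j) = (1, n).
\<close>

definition matmul_degen_A :: "real \<Rightarrow> nat \<Rightarrow> nat \<times> nat \<Rightarrow> real" where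
  "matmul_degen_A t n = (\<lambda>(i, j). (if i = 1 then 1 else t) / (if j = n then t else 1))"

definition matmul_degen_B :: "real \<Rightarrow> nat \<Rightarrow> nat \<times> nat \<Rightarrow> real" where
  "matmul_degen_B t n = (\<lambda>(j, k). if j = n then t else 1)"

definition matmul_degen_C :: "real \<Rightarrow> nat \<times> nat \<Rightarrow> real" where
  "matmul_degen_C t = (\<lambda>(k, i). if i = 1 then 1 else 1 / t)"

lemma matmul_degen_weight_bounds:
  assumes "0 < t" "t \<le> 1"
  shows "0 \<le> matmul_degen_A t n x * matmul_degen_B t n y * matmul_degen_C t z"
    and "matmul_degen_A t n x * matmul_degen_B t n y * matmul_degen_C t z \<le> 1 / t\<^sup>2"
proof -
  have A: "0 \<le> matmul_degen_A t n x" "matmul_degen_A t n x \<le> 1 / t"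
    using assms mult_le_one[of t t] by (auto simp: matmul_degen_A_def split_beta field_simps)
  have B: "0 \<le> matmul_degen_B t n y" "matmul_degen_B t n y \<le> 1"
    using assms by (auto simp: matmul_degen_B_def split_beta)
  have C: "0 \<le> matmul_degen_C t z" "matmul_degen_C t z \<le> 1 / t"
    using assms by (auto simp: matmul_degen_C_def split_beta field_simps)
  show "0 \<le> matmul_degen_A t n x * matmul_degen_B t n y * matmul_degen_C t z"
    using A B C by simp
  have "matmul_degen_A t n x * matmul_degen_B t n y * matmul_degen_C t z \<le> 1 / t * 1 * (1 / t)"
    using A B C assms by (intro mult_mono) auto
  then show "matmul_degen_A t n x * matmul_degen_B t n y * matmul_degen_C t z \<le> 1 / t\<^sup>2"
    by (simp add: power2_eq_square)
qed

lemma matmul_degeneration: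
  assumes "0 < t" "t \<le> 1" "x \<in> mat_idx n" "y \<in> mat_idx n" "z \<in> mat_idx n"
    and "cmod w \<le> 1" "x = (1, n) \<Longrightarrow> w = 1"
  shows "cmod (matmul_degen_A t n x * matmul_degen_B t n y * matmul_degen_C t z
      * (matmul_tensor n x y z - w * matmul_tensor n (1, n) y z) - matmul_red n x y z) \<le> t"
proof -
  obtain i j j' k k' i' where xyz: "x = (i, j)" "y = (j', k)" "z = (k', i')"
    by (cases x, cases y, cases z) auto
  have corner: "(1, n) \<in> mat_idx n"
    using assms(3) by (auto simp: mat_idx_def)
  have M: "matmul_tensor n x y z = (if j = j' \<and> k = k' \<and> i' = i then 1 else 0)"
      "matmul_tensor n (1, n) y z = (if n = j' \<and> k = k' \<and> i' = 1 then 1 else 0)"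
    using matmul_tensor_apply[OF assms(3-5)] matmul_tensor_apply[OF corner assms(4,5)] xyz by simp_all
  show ?thesis
  proof (cases "x = (1, n)")
    case True
    then show ?thesis
      using assms M matmul_red_apply[OF assms(3-5)] by simp
  next
    case False
    then have red: "matmul_red n x y z = matmul_tensor n x y z"
      using matmul_red_apply[OF assms(3-5)] by simp
    consider "j = j' \<and> k = k' \<and> i' = i" | "n = j' \<and> k = k' \<and> i' = 1" | "\<not> (j = j' \<and> k = k' \<and> i' = i)" "\<not> (n = j' \<and> k = k' \<and> i' = 1)"
      by blast
    then show ?thesis
    proof cases
      case 1
      then show ?thesis
        using False M red assms(1) xyz
        by (auto simp: matmul_degen_A_def matmul_degen_B_def matmul_degen_C_def)
    next
      case 2
      define W where "W = matmul_degen_A t n x * matmul_degen_B t n y * matmul_degen_C t z"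
      have W: "0 \<le> W" "W \<le> t"
        using 2 False xyz assms(1,2)
        by (auto simp: W_def matmul_degen_A_def matmul_degen_B_def matmul_degen_C_def)
      have "matmul_tensor n x y z = 0"
        using 2 False xyz M(1) by auto
      then have "cmod (W * (matmul_tensor n x y z - w * matmul_tensor n (1, n) y z) - matmul_red n x y z)
          = W * cmod w"
        using 2 M red W(1) by (simp add: norm_mult)
      also have "\<dots> \<le> t"
        using W mult_left_le[OF assms(6) W(1)] by linarith
      finally show ?thesis
        by (simp add: W_def)
    next
      case 3
      then have "matmul_tensor n x y z = 0" "matmul_tensor n (1, n) y z = 0"
        using M by simp_all
      then show ?thesis
        using red assms(1) by simp
    qed
  qed
qed

lemma matmul_red_approx:
  assumes "tensor_rank_le (mat_idx n) (mat_idx n) (mat_idx n) T r" "r \<ge> 1" "n \<ge> 1"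
    and T_close: "\<forall>x\<in>mat_idx n. \<forall>y\<in>mat_idx n. \<forall>z\<in>mat_idx n. cmod (T x y z - matmul_tensor n x y z) \<le> \<delta>"
    and t: "0 < t" "t \<le> 1"
  shows "\<exists>S. tensor_rank_le (mat_idx n) (mat_idx n) (mat_idx n) S (r - 1) \<and>
    (\<forall>x\<in>mat_idx n. \<forall>y\<in>mat_idx n. \<forall>z\<in>mat_idx n. cmod (S x y z - matmul_red n x y z) \<le> 2 * \<delta> / t\<^sup>2 + t)"
proof -
  let ?I = "mat_idx n" and ?M = "matmul_tensor n"
  have corner: "(1, n) \<in> ?I"
    using assms(3) by (simp add: mat_idx_def)
  then obtain q v where q: "q \<in> ?I" and v: "\<forall>x\<in>?I. cmod (v x) \<le> 1" "v q = 1"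
    and proj: "tensor_rank_le ?I ?I ?I (\<lambda>x y z. T x y z - v x * T q y z) (r - 1)"
    using tensor_rank_le_project[OF assms(1,2) finite_mat_idx] by blast
  obtain sA sB sC where bij: "bij_betw sA ?I ?I" "bij_betw sB ?I ?I" "bij_betw sC ?I ?I"
    and "sA (1, n) = q" and sym: "\<forall>x\<in>?I. \<forall>y\<in>?I. \<forall>z\<in>?I. ?M (sA x) (sB y) (sC z) = ?M x y z"
    using matmul_tensor_move_to_corner[OF q] by blast
  have "\<delta> \<ge> 0"
    using order_trans[OF norm_ge_zero T_close[rule_format, OF corner corner corner]] .
  define W where "W x y z = matmul_degen_A t n x * matmul_degen_B t n y * matmul_degen_C t z" for x y z
  define S where "S = (\<lambda>x y z. complex_of_real (W x y z)
      * (T (sA x) (sB y) (sC z) - v (sA x) * T q (sB y) (sC z)))"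
  have "tensor_rank_le ?I ?I ?I S (r - 1)"
    using tensor_rank_le_reindex_scale[OF proj, of sA ?I sB ?I sC ?I "\<lambda>x. of_real (matmul_degen_A t n x)"
        "\<lambda>y. of_real (matmul_degen_B t n y)" "\<lambda>z. of_real (matmul_degen_C t z)"]
      bij by (simp add: S_def W_def bij_betw_imp_surj_on)
  moreover have "cmod (S x y z - matmul_red n x y z) \<le> 2 * \<delta> / t\<^sup>2 + t"
    if "x \<in> ?I" "y \<in> ?I" "z \<in> ?I" for x y z
  proof -
    define w where "w = v (sA x)"
    define K where "K = ?M x y z - w * ?M (1, n) y z"
    have W: "0 \<le> W x y z" "W x y z \<le> 1 / t\<^sup>2"
      using matmul_degen_weight_bounds[OF t] by (simp_all add: W_def)
    have w: "cmod w \<le> 1" "x = (1, n) \<Longrightarrow> w = 1"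
      using v bij that \<open>sA (1, n) = q\<close> by (auto simp: w_def bij_betw_apply)
    have "K = ?M (sA x) (sB y) (sC z) - w * ?M q (sB y) (sC z)"
      using sym[rule_format, OF that] sym[rule_format, OF corner that(2,3)] \<open>sA (1, n) = q\<close>
      by (simp add: K_def)
    moreover have "cmod (T (sA x) (sB y) (sC z) - ?M (sA x) (sB y) (sC z)) \<le> \<delta>"
        "cmod (T q (sB y) (sC z) - ?M q (sB y) (sC z)) \<le> \<delta>"
      using T_close bij that q by (simp_all add: bij_betw_apply)
    ultimately have "cmod (S x y z - W x y z * K) \<le> 2 * W x y z * \<delta>"
      using norm_scaled_projection_diff_le[OF W(1) w(1)] by (simp add: S_def w_def)
    also have "\<dots> \<le> 2 * \<delta> / t\<^sup>2"
      using W(2) \<open>\<delta> \<ge> 0\<close> mult_right_mono[OF W(2), of "2 * \<delta>"] by (simp add: field_simps)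
    finally have "cmod (S x y z - W x y z * K) \<le> 2 * \<delta> / t\<^sup>2" .
    moreover have "cmod (W x y z * K - matmul_red n x y z) \<le> t"
      using matmul_degeneration[OF t that w] by (simp add: W_def K_def)
    ultimately show ?thesis
      using norm_triangle_ineq[of "S x y z - W x y z * K" "W x y z * K - matmul_red n x y z"] by simp
  qed
  ultimately show ?thesis
    by blast
qed

lemma border_rank_le_matmul_red:
  assumes "border_rank_le (mat_idx n) (mat_idx n) (mat_idx n) (matmul_tensor n) r" "n \<ge> 1"
  shows "border_rank_le (mat_idx n) (mat_idx n) (mat_idx n) (matmul_red n) (r - 1)"
  unfolding border_rank_le_iff_approx[OF finite_mat_idx finite_mat_idx finite_mat_idx]
proof (intro allI impI)
  fix \<epsilon> :: real
  assume "\<epsilon> > 0"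
  define t where "t = min 1 (\<epsilon> / 2)"
  define \<delta> where "\<delta> = \<epsilon> * t\<^sup>2 / 8"
  have t: "0 < t" "t \<le> 1" "t \<le> \<epsilon> / 2" and "\<delta> > 0"
    using \<open>\<epsilon> > 0\<close> by (auto simp: t_def \<delta>_def)
  obtain T where T: "tensor_rank_le (mat_idx n) (mat_idx n) (mat_idx n) T r"
    and T_close: "\<forall>x\<in>mat_idx n. \<forall>y\<in>mat_idx n. \<forall>z\<in>mat_idx n. cmod (T x y z - matmul_tensor n x y z) < \<delta>"
    using assms(1) \<open>\<delta> > 0\<close>
    unfolding border_rank_le_iff_approx[OF finite_mat_idx finite_mat_idx finite_mat_idx] by blast
  have "\<forall>x\<in>mat_idx n. \<forall>y\<in>mat_idx n. \<forall>z\<in>mat_idx n. cmod (T x y z - matmul_tensor n x y z) \<le> \<delta>"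
    using T_close by (simp add: less_imp_le)
  then obtain S where "tensor_rank_le (mat_idx n) (mat_idx n) (mat_idx n) S (r - 1)" and
    "\<forall>x\<in>mat_idx n. \<forall>y\<in>mat_idx n. \<forall>z\<in>mat_idx n. cmod (S x y z - matmul_red n x y z) \<le> 2 * \<delta> / t\<^sup>2 + t"
    using matmul_red_approx[OF T border_rank_le_matmul_tensor_pos[OF assms] assms(2) _ t(1,2)] by blast
  moreover have "2 * \<delta> / t\<^sup>2 + t < \<epsilon>"
    using t \<open>\<epsilon> > 0\<close> by (simp add: \<delta>_def)
  ultimately show "\<exists>S. tensor_rank_le (mat_idx n) (mat_idx n) (mat_idx n) S (r - 1) \<and>
      (\<forall>x\<in>mat_idx n. \<forall>y\<in>mat_idx n. \<forall>z\<in>mat_idx n. cmod (S x y z - matmul_red n x y z) < \<epsilon>)"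
    by force
qed

theorem corollary5p3:
  fixes n :: nat
  assumes "n \<ge> 2"
  shows "border_rank (mat_idx n) (mat_idx n) (mat_idx n) (matmul_tensor n)
           \<ge> border_rank (mat_idx n) (mat_idx n) (mat_idx n) (matmul_red n) + 1"
proof -
  let ?I = "mat_idx n"
  define r where "r = border_rank ?I ?I ?I (matmul_tensor n)"
  have br: "border_rank_le ?I ?I ?I (matmul_tensor n) r"
    unfolding r_def using border_rank_le_border_rank finite_mat_idx by blast
  have "border_rank ?I ?I ?I (matmul_red n) \<le> r - 1"
    unfolding border_rank_def using border_rank_le_matmul_red[OF br] assms by (simp add: Least_le)
  moreover have "r \<ge> 1"
    using border_rank_le_matmul_tensor_pos[OF br] assms by simp
  ultimately show ?thesis
    unfolding r_def by simp
qed

end
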